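(* Let $k$ be a positive integer and let $(C,F)$ be a finite simple undirected graph with $|C|=k$, equipped with edge weights $w:F\to\mathbb{R}$. Suppose that: (C1) $(C,F)$ is connected; (C2) for every partition of $C$ into two disjoint sets $S,T$ (a cut), the cut weight $w(S,T)=\sum_{\{i,j\}\in F,\ i\in S,\ j\in T} w_{ij}$ is non-negative; (C3) for all distinct $i,j,k\in C$, if $\{i,j\}\in F$, $\{j,k\}\in F$ and $\{i,k\}\notin F$, then $w_{ij}+w_{jk}<0$. Then $(C,F)$ is complete, i.e. $\{i,j\}\in F$ for all distinct $i,j\in C$.
   Context: $w_{ij}$ denotes $w(\{i,j\})$ for an edge $\{i,j\}\in F$. *)

theory Defs
  imports Complex_Main
begin

definition simple_graph :: "'a set \<Rightarrow> 'a set set \<Rightarrow> bool" where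
  "simple_graph C F \<longleftrightarrow> finite C \<and> (\<forall>e\<in>F. \<exists>i j. e = {i, j} \<and> i \<noteq> j \<and> i \<in> C \<and> j \<in> C)"

definition adj :: "'a set set \<Rightarrow> 'a \<Rightarrow> 'a \<Rightarrow> bool" where
  "adj F i j \<longleftrightarrow> {i, j} \<in> F"

definition graph_connected :: "'a set \<Rightarrow> 'a set set \<Rightarrow> bool" where
  "graph_connected C F \<longleftrightarrow> (\<forall>i\<in>C. \<forall>j\<in>C. (adj F)\<^sup>*\<^sup>* i j)"

definition cut_weight :: "'a set set \<Rightarrow> ('a set \<Rightarrow> real) \<Rightarrow> 'a set \<Rightarrow> 'a set \<Rightarrow> real" where
  "cut_weight F w S T = (\<Sum>e\<in>{e\<in>F. \<exists>i j. e = {i, j} \<and> i \<in> S \<and> j \<in> T}. w e)"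

definition complete_graph :: "'a set \<Rightarrow> 'a set set \<Rightarrow> bool" where
  "complete_graph C F \<longleftrightarrow> (\<forall>i\<in>C. \<forall>j\<in>C. i \<noteq> j \<longrightarrow> {i, j} \<in> F)"

end

theory Submission
  imports Defs
begin

text \<open>Consider the induced paths \<open>i - j - l\<close>, i.e. \<open>{i, j}, {j, l} \<in> F\<close> but \<open>{i, l} \<notin> F\<close>.
  For every vertex \<open>l\<close>, the edges leaving its closed neighbourhood are exactly the edges
  \<open>{i, j}\<close> of the induced paths ending in \<open>l\<close>. Summing (C2) over the cuts that separate each
  closed neighbourhood from the rest of the graph therefore gives \<open>\<Sum> w\<^sub>i\<^sub>j \<ge> 0\<close> over all
  induced paths, and after reversing the paths also \<open>\<Sum> w\<^sub>j\<^sub>l \<ge> 0\<close>. By (C3), however,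
  \<open>\<Sum> (w\<^sub>i\<^sub>j + w\<^sub>j\<^sub>l) < 0\<close> as soon as an induced path exists, and a connected graph
  without induced paths is complete.\<close>

text \<open>Paths are ordered triples, so every induced path occurs in both directions.\<close>

definition induced_P3 :: "'a set \<Rightarrow> 'a set set \<Rightarrow> ('a \<times> 'a \<times> 'a) set" where
  "induced_P3 C F =
     {(i, j, l). i \<in> C \<and> j \<in> C \<and> l \<in> C \<and> {i, j} \<in> F \<and> {j, l} \<in> F \<and> {i, l} \<notin> F \<and> i \<noteq> l}"

definition closed_nbhd :: "'a set \<Rightarrow> 'a set set \<Rightarrow> 'a \<Rightarrow> 'a set" where
  "closed_nbhd C F v = {u \<in> C. u = v \<or> {u, v} \<in> F}"

definition cut_edges :: "'a set set \<Rightarrow> 'a set \<Rightarrow> 'a set \<Rightarrow> 'a set set" where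
  "cut_edges F S T = {e \<in> F. \<exists>i j. e = {i, j} \<and> i \<in> S \<and> j \<in> T}"

lemma closed_nbhd_subset: "closed_nbhd C F v \<subseteq> C"
  by (auto simp: closed_nbhd_def)

lemma cut_weight_eq_sum_cut_edges: "cut_weight F w S T = sum w (cut_edges F S T)"
  by (simp add: cut_weight_def cut_edges_def)

lemma simple_graph_edgeD:
  assumes "simple_graph C F" and "{a, b} \<in> F"
  shows "a \<noteq> b" and "a \<in> C" and "b \<in> C"
  using assms by (auto simp: simple_graph_def doubleton_eq_iff)

lemma simple_graph_finite_edges:
  assumes "simple_graph C F"
  shows "finite F"
proof (rule finite_subset)
  show "F \<subseteq> Pow C" using assms by (auto simp: simple_graph_def)
  show "finite (Pow C)" using assms by (simp add: simple_graph_def)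
qed

lemma finite_induced_P3:
  assumes "simple_graph C F"
  shows "finite (induced_P3 C F)"
  by (rule finite_subset[of _ "C \<times> C \<times> C"]) (use assms in \<open>auto simp: induced_P3_def simple_graph_def\<close>)

lemma connected_without_induced_P3_complete:
  assumes simple: "simple_graph C F" and conn: "graph_connected C F"
    and no_P3: "induced_P3 C F = {}"
  shows "complete_graph C F"
  unfolding complete_graph_def
proof (intro ballI impI)
  fix i j assume "i \<in> C" "j \<in> C" "i \<noteq> j"
  have "(adj F)\<^sup>*\<^sup>* i j" using conn \<open>i \<in> C\<close> \<open>j \<in> C\<close> by (simp add: graph_connected_def)
  then have "i = j \<or> {i, j} \<in> F"
  proof (induction rule: rtranclp_induct)
    case base
    then show ?case by simp
  next
    case (step y z)
    have yz: "{y, z} \<in> F" using step.hyps(2) by (simp add: adj_def)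
    show ?case
    proof (cases "i = y \<or> i = z")
      case True
      then show ?thesis using yz by (auto simp: insert_commute)
    next
      case False
      then have "{i, y} \<in> F" using step.IH by simp
      then have "(i, y, z) \<notin> induced_P3 C F" using no_P3 by simp
      then show ?thesis
        using False yz \<open>{i, y} \<in> F\<close> simple_graph_edgeD[OF simple] by (auto simp: induced_P3_def)
    qed
  qed
  then show "{i, j} \<in> F" using \<open>i \<noteq> j\<close> by simp
qed

lemma bij_betw_induced_P3_closed_nbhd_cut_edges:
  assumes simple: "simple_graph C F"
  shows "bij_betw (\<lambda>(i, j, l). (l, {i, j})) (induced_P3 C F)
           (SIGMA v:C. cut_edges F (closed_nbhd C F v) (C - closed_nbhd C F v))"
    (is "bij_betw ?g ?P ?X")
proof (rule bij_betw_imageI)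
  show "inj_on ?g ?P"
  proof (rule inj_onI)
    fix s t assume s: "s \<in> ?P" and t: "t \<in> ?P" and eq: "?g s = ?g t"
    obtain i j l i' j' l' where st: "s = (i, j, l)" "t = (i', j', l')" by (cases s, cases t) auto
    have l: "l = l'" and "{i, j} = {i', j'}" using eq by (auto simp: st)
    then consider "i = i'" "j = j'" | "i = j'" "j = i'" by (auto simp: doubleton_eq_iff)
    then show "s = t"
    proof cases
      case 1
      then show ?thesis using st l by simp
    next
      case 2
      then have "{i, l} \<in> F" using t by (simp add: st l induced_P3_def)
      then show ?thesis using s by (simp add: st induced_P3_def)
    qed
  qed
  show "?g ` ?P = ?X"
  proof
    show "?g ` ?P \<subseteq> ?X"
    proof
      fix x assume "x \<in> ?g ` ?P"
      then obtain i j l where P3: "(i, j, l) \<in> ?P" and x: "x = (l, {i, j})" by auto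
      then have "l \<in> C" "{i, j} \<in> F" "j \<in> closed_nbhd C F l" "i \<in> C - closed_nbhd C F l"
        by (auto simp: induced_P3_def closed_nbhd_def insert_commute)
      moreover have "{i, j} = {j, i}" by blast
      ultimately show "x \<in> ?X" unfolding x cut_edges_def by blast
    qed
  next
    show "?X \<subseteq> ?g ` ?P"
    proof (rule subsetI, elim SigmaE)
      fix x v e
      assume x: "x = (v, e)" and v: "v \<in> C"
        and e: "e \<in> cut_edges F (closed_nbhd C F v) (C - closed_nbhd C F v)"
      then obtain a b where ab: "e = {a, b}" "e \<in> F" "a \<in> closed_nbhd C F v" "b \<in> C - closed_nbhd C F v"
        by (auto simp: cut_edges_def)
      have ba: "{b, a} \<in> F" and "{a, b} = {b, a}" using ab by (simp_all add: insert_commute)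
      have b: "b \<in> C" "b \<noteq> v" "{b, v} \<notin> F" using ab(4) by (auto simp: closed_nbhd_def)
      have "a \<noteq> v" using ba b(3) by auto
      then have "a \<in> C" "{a, v} \<in> F" using ab(3) by (auto simp: closed_nbhd_def)
      with v ba b have "(b, a, v) \<in> ?P" by (simp add: induced_P3_def)
      moreover have "?g (b, a, v) = (v, e)" using ab \<open>{a, b} = {b, a}\<close> by simp
      ultimately show "x \<in> ?g ` ?P" unfolding x by (rule rev_image_eqI[OF _ sym])
    qed
  qed
qed

lemma sum_cut_weight_closed_nbhd:
  assumes simple: "simple_graph C F"
  shows "(\<Sum>v\<in>C. cut_weight F w (closed_nbhd C F v) (C - closed_nbhd C F v))
           = (\<Sum>(i, j, l)\<in>induced_P3 C F. w {i, j})"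
proof -
  have finC: "finite C" using simple by (simp add: simple_graph_def)
  have "finite (cut_edges F S T)" for S T
    using simple_graph_finite_edges[OF simple] by (simp add: cut_edges_def)
  then have "(\<Sum>v\<in>C. cut_weight F w (closed_nbhd C F v) (C - closed_nbhd C F v))
      = (\<Sum>(v, e)\<in>(SIGMA v:C. cut_edges F (closed_nbhd C F v) (C - closed_nbhd C F v)). w e)"
    by (simp add: cut_weight_eq_sum_cut_edges sum.Sigma[OF finC])
  also have "\<dots> = (\<Sum>(i, j, l)\<in>induced_P3 C F. w {i, j})"
    using sum.reindex_bij_betw[OF bij_betw_induced_P3_closed_nbhd_cut_edges[OF simple],
        of "\<lambda>(v, e). w e"]
    by (simp add: case_prod_unfold)
  finally show ?thesis .
qed

lemma induced_P3_reverse_iff: "(l, j, i) \<in> induced_P3 C F \<longleftrightarrow> (i, j, l) \<in> induced_P3 C F"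
  unfolding induced_P3_def by (simp add: insert_commute) blast

lemma sum_induced_P3_reverse:
  "(\<Sum>(i, j, l)\<in>induced_P3 C F. f l j i) = (\<Sum>(i, j, l)\<in>induced_P3 C F. f i j l)"
  by (rule sum.reindex_bij_witness[of _ "\<lambda>(i, j, l). (l, j, i)" "\<lambda>(i, j, l). (l, j, i)"])
    (auto simp: induced_P3_reverse_iff)

theorem proposition1:
  fixes C :: "'a set" and F :: "'a set set" and w :: "'a set \<Rightarrow> real" and k :: nat
  assumes "k > 0"
    and "simple_graph C F"
    and "card C = k"
    and C1: "graph_connected C F"
    and C2: "\<And>S T. S \<inter> T = {} \<Longrightarrow> S \<union> T = C \<Longrightarrow> cut_weight F w S T \<ge> 0"
    and C3: "\<And>i j l. i \<in> C \<Longrightarrow> j \<in> C \<Longrightarrow> l \<in> C \<Longrightarrow> i \<noteq> j \<Longrightarrow> j \<noteq> l \<Longrightarrow> i \<noteq> l \<Longrightarrow>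
               {i, j} \<in> F \<Longrightarrow> {j, l} \<in> F \<Longrightarrow> {i, l} \<notin> F \<Longrightarrow> w {i, j} + w {j, l} < 0"
  shows "complete_graph C F"
proof (rule ccontr)
  let ?P = "induced_P3 C F"
  let ?N = "closed_nbhd C F"
  assume "\<not> complete_graph C F"
  then have "?P \<noteq> {}" using connected_without_induced_P3_complete assms(2) C1 by blast
  with finite_induced_P3[OF assms(2)]
  have "(\<Sum>(i, j, l)\<in>?P. w {i, j} + w {j, l}) < (\<Sum>(i, j, l)\<in>?P. 0)"
  proof (rule sum_strict_mono, clarify)
    fix i j l assume "(i, j, l) \<in> ?P"
    then show "w {i, j} + w {j, l} < 0"
      using C3 simple_graph_edgeD[OF assms(2)] by (simp add: induced_P3_def)
  qed
  also have "(\<Sum>(i, j, l)\<in>?P. w {i, j} + w {j, l}) = 2 * (\<Sum>(i, j, l)\<in>?P. w {i, j})"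
    using sum_induced_P3_reverse[of "\<lambda>i j l. w {j, l}" C F]
    by (simp add: sum.distrib case_prod_unfold insert_commute)
  also have "(\<Sum>(i, j, l)\<in>?P. w {i, j}) = (\<Sum>v\<in>C. cut_weight F w (?N v) (C - ?N v))"
    by (rule sum_cut_weight_closed_nbhd[OF assms(2), symmetric])
  finally have "(\<Sum>v\<in>C. cut_weight F w (?N v) (C - ?N v)) < 0" by simp
  moreover have "cut_weight F w (?N v) (C - ?N v) \<ge> 0" for v
    by (rule C2) (use closed_nbhd_subset[of C F v] in blast)+
  ultimately show False by (simp add: sum_nonneg leD)
qed

end
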